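(* Let $q\in\mathbb{N}$ be odd, $\alpha_2\in\mathbb{Z}$ with $\gcd(\alpha_2,q)=1$, and $N\in\mathbb{N}$ with $N<q/2$. Then for every $\varepsilon>0$, $$\sum_{\chi\bmod q}\Bigg|\sum_{|x_1|,|x_2|\le N}\chi(x_1^2+\alpha_2x_2^2)\Bigg|^2\ll_\varepsilon qN^{2+\varepsilon}\left(1+\frac{N^2}{q}\right),$$ where the outer sum runs over all Dirichlet characters modulo $q$ and the inner sum over integers $x_1,x_2$. *)

theory Defs
  imports Complex_Main
begin

definition dirichlet_char :: "int \<Rightarrow> (int \<Rightarrow> complex) \<Rightarrow> bool" where
  "dirichlet_char q \<chi> \<longleftrightarrow>
     (\<forall>n. \<chi> (n + q) = \<chi> n) \<and>
     (\<forall>m n. \<chi> (m * n) = \<chi> m * \<chi> n) \<and>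
     \<chi> 1 = 1 \<and>
     (\<forall>n. \<chi> n = 0 \<longleftrightarrow> \<not> coprime n q)"

end

theory Submission
  imports Defs "HOL-Number_Theory.Number_Theory"
begin

text \<open>Grouping the inner sum by the residue of \<open>x\<^sub>1\<^sup>2 + \<alpha>\<^sub>2 x\<^sub>2\<^sup>2\<close> mod \<open>q\<close> and applying Bessel's
  inequality to the orthogonal family of Dirichlet characters bounds the left-hand side by \<open>q\<close> times
  the number of pairs of points of the box \<open>[-N, N]\<^sup>2\<close> at which the form agrees mod \<open>q\<close>.
  Such a collision means \<open>q dvd (x\<^sub>1\<^sup>2 - y\<^sub>1\<^sup>2) + \<alpha>\<^sub>2 (x\<^sub>2\<^sup>2 - y\<^sub>2\<^sup>2)\<close>. If \<open>q dvd x\<^sub>2\<^sup>2 - y\<^sub>2\<^sup>2\<close>, then also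
  \<open>q dvd x\<^sub>1\<^sup>2 - y\<^sub>1\<^sup>2\<close>; otherwise \<open>x\<^sub>1\<^sup>2 - y\<^sub>1\<^sup>2\<close> is a nonzero integer of size at most \<open>N\<^sup>2\<close> in a fixed
  residue class, of which there are \<open>O(1 + N\<^sup>2/q)\<close>, and each has at most \<open>2 d(m) \<ll> N\<^sup>\<epsilon>\<close>
  representations as a difference of two squares by the divisor bound \<open>d(m) \<ll> m\<^sup>\<delta>\<close>.
  Both cases give \<open>\<ll> N\<^bsup>2+\<epsilon>\<^esup> (1 + N\<^sup>2/q)\<close> collisions.\<close>

lemma card_divisors_prime_power_mult_le:
  fixes p m k :: nat
  assumes p: "prime p" and not_dvd: "\<not> p dvd m" and m: "m > 0"
  shows "card {d. d dvd p ^ k * m} \<le> (k + 1) * card {e. e dvd m}"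
proof -
  have "{d. d dvd p ^ k * m} \<subseteq> (\<lambda>(i, e). p ^ i * e) ` ({0..k} \<times> {e. e dvd m})"
  proof
    fix d assume "d \<in> {d. d dvd p ^ k * m}"
    hence d: "d dvd p ^ k * m" by simp
    have "d \<noteq> 0" using d m p by (metis dvd_0_left_iff mult_is_0 power_eq_0_iff prime_gt_0_nat not_gr0)
    then obtain e where de: "d = p ^ multiplicity p d * e" and "\<not> p dvd e"
      using multiplicity_decompose' p by (metis not_prime_unit)
    hence "coprime e (p ^ k)"
      using p by (metis coprime_commute coprime_power_right_iff prime_imp_coprime)
    moreover have "e dvd p ^ k * m" using d de by (metis dvd_mult_right mult.commute)
    ultimately have "e dvd m" using coprime_dvd_mult_right_iff by blast
    have "coprime (p ^ multiplicity p d) m"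
      using not_dvd p by (metis coprime_power_left_iff prime_imp_coprime)
    moreover have "p ^ multiplicity p d dvd p ^ k * m" using d de by (metis dvd_mult_left)
    ultimately have "p ^ multiplicity p d dvd p ^ k" using coprime_dvd_mult_left_iff by blast
    hence "multiplicity p d \<le> k" using p power_dvd_imp_le prime_gt_1_nat by blast
    thus "d \<in> (\<lambda>(i, e). p ^ i * e) ` ({0..k} \<times> {e. e dvd m})"
      using de \<open>e dvd m\<close> by force
  qed
  hence "card {d. d dvd p ^ k * m} \<le> card ((\<lambda>(i, e). p ^ i * e) ` ({0..k} \<times> {e. e dvd m}))"
    using m by (intro card_mono) auto
  also have "\<dots> \<le> card ({0..k} \<times> {e. e dvd m})" by (rule card_image_le) (use m in auto)
  finally show ?thesis by (simp add: card_cartesian_product)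
qed

lemma real_Suc_le_two_powr:
  fixes \<delta> :: real assumes "\<delta> > 0"
  shows "real (k + 1) \<le> (1 + 1 / (\<delta> * ln 2)) * 2 powr (real k * \<delta>)"
proof -
  define c where "c = \<delta> * ln 2"
  have c: "c > 0" using assms by (simp add: c_def)
  have "1 + real k * c \<le> exp (real k * c)" by (rule exp_ge_add_one_self)
  also have "\<dots> = 2 powr (real k * \<delta>)" by (simp add: powr_def c_def mult_ac)
  finally have exp_bound: "1 + real k * c \<le> 2 powr (real k * \<delta>)" .
  have "real (k + 1) \<le> (1 + 1 / c) * (1 + real k * c)"
    using c by (simp add: field_simps)
  also have "\<dots> \<le> (1 + 1 / c) * 2 powr (real k * \<delta>)"
    using exp_bound c by (intro mult_left_mono) auto
  finally show ?thesis by (simp add: c_def)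
qed

text \<open>Only the finitely many primes below \<open>2 powr (1/\<delta>)\<close> need the constant \<open>K > 1\<close>;
  for larger primes already \<open>k + 1 \<le> 2 ^ k \<le> p powr (k * \<delta>)\<close>.\<close>

lemma real_Suc_le_prime_powr:
  fixes \<delta> :: real
  assumes \<delta>: "\<delta> > 0" and p: "prime p"
  shows "real (k + 1) \<le> (if real p < 2 powr (1 / \<delta>) then 1 + 1 / (\<delta> * ln 2) else 1)
                          * real p powr (real k * \<delta>)"
proof (cases "real p < 2 powr (1 / \<delta>)")
  case True
  have "real (k + 1) \<le> (1 + 1 / (\<delta> * ln 2)) * 2 powr (real k * \<delta>)"
    by (rule real_Suc_le_two_powr[OF \<delta>])
  also have "\<dots> \<le> (1 + 1 / (\<delta> * ln 2)) * real p powr (real k * \<delta>)"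
    using \<delta> p prime_ge_2_nat[OF p] by (intro mult_left_mono powr_mono2) auto
  finally show ?thesis using True by simp
next
  case False
  have "(2 powr (1 / \<delta>)) powr \<delta> \<le> real p powr \<delta>"
    using False \<delta> by (intro powr_mono2) auto
  hence two_le: "2 \<le> real p powr \<delta>" using \<delta> by (simp add: powr_powr)
  have "real (k + 1) \<le> 2 ^ k" by (induction k) auto
  also have "\<dots> \<le> (real p powr \<delta>) ^ k" using two_le by (intro power_mono) auto
  also have "\<dots> = real p powr (real k * \<delta>)"
    using prime_gt_0_nat[OF p] by (simp add: powr_realpow[symmetric] powr_powr mult_ac)
  finally show ?thesis using False by simp
qed

definition small_prime_divisors :: "real \<Rightarrow> nat \<Rightarrow> nat set" where
  "small_prime_divisors \<delta> n = {p. prime p \<and> real p < 2 powr (1 / \<delta>) \<and> p dvd n}"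

lemma card_small_prime_divisors_prime_power_mult:
  assumes p: "prime p" and not_dvd: "\<not> p dvd m" and m: "m > 0" and k: "k > 0"
  shows "card (small_prime_divisors \<delta> m) + (if real p < 2 powr (1 / \<delta>) then 1 else 0)
           \<le> card (small_prime_divisors \<delta> (p ^ k * m))" (is "card ?S + _ \<le> card ?T")
proof -
  have "p ^ k * m > 0" using m p by (simp add: prime_gt_0_nat)
  hence "finite {d. d dvd p ^ k * m}" by simp
  moreover have "?T \<subseteq> {d. d dvd p ^ k * m}" by (auto simp: small_prime_divisors_def)
  ultimately have fin: "finite ?T" by (rule finite_subset[rotated])
  have sub: "?S \<subseteq> ?T" "p \<notin> ?S" using not_dvd by (auto simp: small_prime_divisors_def)
  show ?thesis
  proof (cases "real p < 2 powr (1 / \<delta>)")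
    case True
    hence "insert p ?S \<subseteq> ?T" using sub p k by (auto simp: small_prime_divisors_def)
    hence "card (insert p ?S) \<le> card ?T" using fin card_mono by blast
    moreover have "finite ?S" using sub fin finite_subset by blast
    ultimately show ?thesis using sub True by simp
  qed (use card_mono[OF fin sub(1)] in simp)
qed

lemma card_divisors_le_powr_small_prime_divisors:
  fixes \<delta> :: real
  defines "K \<equiv> 1 + 1 / (\<delta> * ln 2)"
  assumes \<delta>: "\<delta> > 0" and "n > 0"
  shows "real (card {d. d dvd n}) \<le> K ^ card (small_prime_divisors \<delta> n) * real n powr \<delta>"
  using \<open>n > 0\<close>
proof (induction n rule: less_induct)
  case (less n)
  have K: "K \<ge> 1" using \<delta> by (simp add: K_def)
  show ?case
  proof (cases "n = 1")
    case True
    have "small_prime_divisors \<delta> 1 = {}" by (auto simp: small_prime_divisors_def)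
    thus ?thesis using True by simp
  next
    case False
    then obtain p where p: "prime p" "p dvd n" using prime_factor_nat by blast
    define k where "k = multiplicity p n"
    obtain m where n: "n = p ^ k * m" and not_dvd: "\<not> p dvd m"
      using multiplicity_decompose'[of n p] k_def less.prems p by (metis not_prime_unit not_gr0)
    have k: "k > 0" using p less.prems by (simp add: k_def prime_multiplicity_gt_zero_iff)
    hence "p ^ k > 1" using prime_gt_1_nat[OF p(1)] by (intro one_less_power)
    moreover have m: "m > 0" using n less.prems by (metis gr0I mult_0_right)
    ultimately have "m < n" using n by simp
    hence IH: "real (card {d. d dvd m}) \<le> K ^ card (small_prime_divisors \<delta> m) * real m powr \<delta>"
      using less.IH m by simp
    define e where "e = (if real p < 2 powr (1 / \<delta>) then 1 else 0 :: nat)"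
    have K_e: "(if real p < 2 powr (1 / \<delta>) then 1 + 1 / (\<delta> * ln 2) else 1) = K ^ e"
      by (simp add: e_def K_def)
    have "real (card {d. d dvd n}) \<le> real (k + 1) * real (card {d. d dvd m})"
      using card_divisors_prime_power_mult_le[OF p(1) not_dvd m, of k] n
      by (metis of_nat_le_iff of_nat_mult)
    also have "\<dots> \<le> (K ^ e * real p powr (real k * \<delta>))
                      * (K ^ card (small_prime_divisors \<delta> m) * real m powr \<delta>)"
      using real_Suc_le_prime_powr[OF \<delta> p(1), of k] IH K unfolding K_e by (intro mult_mono) auto
    also have "\<dots> = K ^ (card (small_prime_divisors \<delta> m) + e) * real n powr \<delta>"
      using n prime_gt_0_nat[OF p(1)]
      by (simp add: powr_mult powr_realpow[symmetric] powr_powr power_add mult_ac)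
    also have "\<dots> \<le> K ^ card (small_prime_divisors \<delta> n) * real n powr \<delta>"
      using card_small_prime_divisors_prime_power_mult[OF p(1) not_dvd m k, of \<delta>] n K
      by (intro mult_right_mono power_increasing) (auto simp: e_def)
    finally show ?thesis .
  qed
qed

lemma card_divisors_le_powr:
  fixes \<delta> :: real assumes \<delta>: "\<delta> > 0"
  obtains K where "K > 0" "\<And>n::nat. n > 0 \<Longrightarrow> real (card {d. d dvd n}) \<le> K * real n powr \<delta>"
proof
  define K where "K = 1 + 1 / (\<delta> * ln 2)"
  define P where "P = nat \<lceil>2 powr (1 / \<delta>)\<rceil>"
  have K: "K \<ge> 1" using \<delta> by (simp add: K_def)
  thus "K ^ P > 0" by simp
  fix n :: nat assume n: "n > 0"
  have "small_prime_divisors \<delta> n \<subseteq> {..<P}"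
    by (auto simp: small_prime_divisors_def P_def zless_nat_eq_int_zless less_ceiling_iff)
  hence "card (small_prime_divisors \<delta> n) \<le> P"
    using card_mono[of "{..<P}"] by fastforce
  hence "K ^ card (small_prime_divisors \<delta> n) \<le> K ^ P"
    using K by (intro power_increasing) auto
  thus "real (card {d. d dvd n}) \<le> K ^ P * real n powr \<delta>"
    using card_divisors_le_powr_small_prime_divisors[OF \<delta> n] unfolding K_def
    by (meson mult_right_mono order_trans powr_ge_zero)
qed

lemma card_int_divisors_le:
  fixes m :: int assumes "m \<noteq> 0"
  shows "card {u. u dvd m} \<le> 2 * card {d. d dvd nat \<bar>m\<bar>}"
proof -
  define D where "D = {d :: nat. d dvd nat \<bar>m\<bar>}"
  have "finite D" unfolding D_def by (rule finite_divisors_nat) (use assms in simp)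
  have "{u. u dvd m} \<subseteq> (\<lambda>(s, d). s * int d) ` ({1, -1} \<times> D)"
  proof
    fix u assume "u \<in> {u. u dvd m}"
    hence "nat \<bar>u\<bar> \<in> D" by (simp add: D_def)
    moreover have "u = sgn u * int (nat \<bar>u\<bar>)" by (simp add: sgn_mult_abs)
    moreover have "u \<noteq> 0" using \<open>u \<in> _\<close> assms by auto
    ultimately show "u \<in> (\<lambda>(s, d). s * int d) ` ({1, -1} \<times> D)"
      by (intro image_eqI[of _ _ "(sgn u, nat \<bar>u\<bar>)"]) (auto simp: sgn_if)
  qed
  hence "card {u. u dvd m} \<le> card ((\<lambda>(s, d). s * int d) ` ({1, -1} \<times> D))"
    using \<open>finite D\<close> by (intro card_mono) auto
  also have "\<dots> \<le> card ({1, -1 :: int} \<times> D)" by (rule card_image_le) (use \<open>finite D\<close> in auto)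
  finally show ?thesis by (simp add: card_cartesian_product D_def)
qed

text \<open>A pair with \<open>x\<^sup>2 - y\<^sup>2 = m \<noteq> 0\<close> is determined by the divisor \<open>x - y\<close> of \<open>m\<close>.\<close>

lemma card_diff_squares_eq_le:
  fixes m :: int and B :: "int set" assumes "m \<noteq> 0"
  shows "card {(x, y). x \<in> B \<and> y \<in> B \<and> x\<^sup>2 - y\<^sup>2 = m} \<le> card {u. u dvd m}"
proof -
  let ?A = "{(x, y). x \<in> B \<and> y \<in> B \<and> x\<^sup>2 - y\<^sup>2 = m}"
  have factor: "x\<^sup>2 - y\<^sup>2 = (x - y) * (x + y)" for x y :: int
    by (simp add: power2_eq_square algebra_simps)
  have determined: "x = x' \<and> y = y'"
    if "x\<^sup>2 - y\<^sup>2 = m" "x'\<^sup>2 - y'\<^sup>2 = m" and diff: "x - y = x' - y'" for x y x' y' :: int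
  proof -
    have "(x - y) * (x + y) = (x - y) * (x' + y')"
      using that unfolding factor by simp
    moreover have "x - y \<noteq> 0" using that(1) assms unfolding factor by auto
    ultimately have "x + y = x' + y'" by simp
    with diff show ?thesis by linarith
  qed
  have "inj_on (\<lambda>(x, y). x - y) ?A"
  proof (rule inj_onI)
    fix u v assume "u \<in> ?A" "v \<in> ?A" "(\<lambda>(x, y). x - y) u = (\<lambda>(x, y). x - y) v"
    thus "u = v" using determined[of "fst u" "snd u" "fst v" "snd v"]
      by (auto simp: case_prod_beta prod_eq_iff)
  qed
  moreover have "(\<lambda>(x, y). x - y) ` ?A \<subseteq> {u. u dvd m}" using factor by auto
  moreover have "finite {u. u dvd m}" using assms by simp
  ultimately show ?thesis by (rule card_inj_on_le)
qed

lemma card_diff_squares_eq_le_powr: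
  fixes n m :: int and K \<delta> :: real
  assumes divisors: "\<And>k::nat. k > 0 \<Longrightarrow> real (card {d. d dvd k}) \<le> K * real k powr \<delta>"
    and \<delta>: "\<delta> \<ge> 0" and n: "n \<ge> 0" and m: "m \<noteq> 0" "\<bar>m\<bar> \<le> n\<^sup>2"
  shows "real (card {(x, y). x \<in> {-n..n} \<and> y \<in> {-n..n} \<and> x\<^sup>2 - y\<^sup>2 = m})
           \<le> 2 * K * real_of_int n powr (2 * \<delta>)"
proof -
  have "K \<ge> 1" using divisors[of 1] by simp
  have "card {(x, y). x \<in> {-n..n} \<and> y \<in> {-n..n} \<and> x\<^sup>2 - y\<^sup>2 = m}
          \<le> 2 * card {d. d dvd nat \<bar>m\<bar>}"
    using card_diff_squares_eq_le[OF m(1)] card_int_divisors_le[OF m(1)] by (rule le_trans)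
  hence "real (card {(x, y). x \<in> {-n..n} \<and> y \<in> {-n..n} \<and> x\<^sup>2 - y\<^sup>2 = m})
          \<le> 2 * real (card {d. d dvd nat \<bar>m\<bar>})"
    by linarith
  also have "\<dots> \<le> 2 * (K * real_of_int \<bar>m\<bar> powr \<delta>)"
    using divisors[of "nat \<bar>m\<bar>"] m(1) by simp
  also have "\<dots> \<le> 2 * (K * real_of_int (n\<^sup>2) powr \<delta>)"
    using m(2) \<delta> \<open>K \<ge> 1\<close> by (intro mult_left_mono powr_mono2) (simp_all del: of_int_power)
  also have "real_of_int (n\<^sup>2) powr \<delta> = real_of_int n powr (2 * \<delta>)"
    using n by (simp add: powr_powr powr_realpow[symmetric] flip: powr_numeral)
  finally show ?thesis by simp
qed

lemma card_residue_class_le: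
  fixes a b Q h :: int assumes Q: "Q > 0" and "a \<le> b"
  shows "real (card {m \<in> {a..b}. m mod Q = h mod Q}) \<le> (b - a) / Q + 2"
proof -
  define M where "M = {m \<in> {a..b}. m mod Q = h mod Q}"
  have "inj_on (\<lambda>m. m div Q) M"
  proof (rule inj_onI)
    fix x y assume "x \<in> M" "y \<in> M" "x div Q = y div Q"
    moreover from this have "x mod Q = y mod Q" by (simp add: M_def)
    ultimately show "x = y" by (metis mult_div_mod_eq)
  qed
  moreover have "(\<lambda>m. m div Q) ` M \<subseteq> {a div Q .. b div Q}"
    using Q by (auto simp: M_def intro: zdiv_mono1)
  ultimately have "card M \<le> card {a div Q .. b div Q}"
    by (intro card_inj_on_le) auto
  moreover have "a div Q \<le> b div Q" using Q \<open>a \<le> b\<close> by (intro zdiv_mono1)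
  ultimately have "real (card M) \<le> real_of_int (b div Q) - real_of_int (a div Q) + 1"
    by simp
  also have "\<dots> \<le> b / Q - (a / Q - 1) + 1"
    using of_int_floor_le[of "b / Q"] real_of_int_floor_gt_diff_one[of "a / Q"]
    by (simp add: floor_divide_of_int_eq)
  finally show ?thesis by (simp add: M_def diff_divide_distrib)
qed

lemma abs_diff_squares_le:
  fixes x y n :: int assumes "\<bar>x\<bar> \<le> n" "\<bar>y\<bar> \<le> n"
  shows "\<bar>x\<^sup>2 - y\<^sup>2\<bar> \<le> n\<^sup>2"
proof -
  have "x\<^sup>2 \<le> n\<^sup>2" "y\<^sup>2 \<le> n\<^sup>2"
    using assms by (metis abs_ge_zero power2_abs power_mono)+
  moreover have "x\<^sup>2 \<ge> 0" "y\<^sup>2 \<ge> 0" by simp_all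
  ultimately show ?thesis by linarith
qed

lemma card_nonzero_diff_squares_mod_le:
  fixes n Q h :: int and R :: real
  assumes Q: "Q > 0" and n: "n \<ge> 0" and R: "R \<ge> 0"
    and reps: "\<And>m. m \<noteq> 0 \<Longrightarrow> \<bar>m\<bar> \<le> n\<^sup>2 \<Longrightarrow>
        real (card {(x, y). x \<in> {-n..n} \<and> y \<in> {-n..n} \<and> x\<^sup>2 - y\<^sup>2 = m}) \<le> R"
  shows "real (card {(x, y). x \<in> {-n..n} \<and> y \<in> {-n..n} \<and>
                              (x\<^sup>2 - y\<^sup>2) mod Q = h mod Q \<and> x\<^sup>2 - y\<^sup>2 \<noteq> 0})
           \<le> (2 * n\<^sup>2 / Q + 2) * R"
proof -
  define M where "M = {m \<in> {-(n\<^sup>2)..n\<^sup>2}. m mod Q = h mod Q}"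
  define A where "A = (\<lambda>m. {(x, y). x \<in> {-n..n} \<and> y \<in> {-n..n} \<and> x\<^sup>2 - y\<^sup>2 = m})"
  have fin_M: "finite M" unfolding M_def by (rule finite_subset[of _ "{-(n\<^sup>2)..n\<^sup>2}"]) auto
  have fin_A: "finite (A m)" for m
    by (rule finite_subset[of _ "{-n..n} \<times> {-n..n}"]) (auto simp: A_def)
  have "{(x, y). x \<in> {-n..n} \<and> y \<in> {-n..n} \<and> (x\<^sup>2 - y\<^sup>2) mod Q = h mod Q \<and> x\<^sup>2 - y\<^sup>2 \<noteq> 0}
          \<subseteq> (\<Union>m\<in>M - {0}. A m)"
    using abs_diff_squares_le[of _ n] by (fastforce simp: M_def A_def abs_le_iff)
  hence "card {(x, y). x \<in> {-n..n} \<and> y \<in> {-n..n} \<and> (x\<^sup>2 - y\<^sup>2) mod Q = h mod Q \<and> x\<^sup>2 - y\<^sup>2 \<noteq> 0}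
           \<le> card (\<Union>m\<in>M - {0}. A m)"
    using fin_A fin_M by (intro card_mono) auto
  also have "\<dots> \<le> (\<Sum>m\<in>M - {0}. card (A m))" using fin_M by (intro card_UN_le) simp
  finally have "real (card {(x, y). x \<in> {-n..n} \<and> y \<in> {-n..n} \<and>
                              (x\<^sup>2 - y\<^sup>2) mod Q = h mod Q \<and> x\<^sup>2 - y\<^sup>2 \<noteq> 0})
                  \<le> (\<Sum>m\<in>M - {0}. real (card (A m)))"
    by (simp flip: of_nat_sum)
  also have "\<dots> \<le> real (card (M - {0})) * R"
    using reps by (intro sum_bounded_above) (auto simp: M_def A_def)
  also have "\<dots> \<le> real (card M) * R"
    using R card_mono[OF fin_M, of "M - {0}"] by (intro mult_right_mono) auto
  also have "\<dots> \<le> (2 * n\<^sup>2 / Q + 2) * R"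
    using card_residue_class_le[OF Q, of "-(n\<^sup>2)" "n\<^sup>2" h] R by (intro mult_right_mono) (auto simp: M_def)
  finally show ?thesis .
qed

lemma card_diff_squares_dvd_le:
  fixes n Q :: int and R :: real
  assumes Q: "Q > 0" and n: "n \<ge> 0" and R: "R \<ge> 0"
    and reps: "\<And>m. m \<noteq> 0 \<Longrightarrow> \<bar>m\<bar> \<le> n\<^sup>2 \<Longrightarrow>
        real (card {(x, y). x \<in> {-n..n} \<and> y \<in> {-n..n} \<and> x\<^sup>2 - y\<^sup>2 = m}) \<le> R"
  shows "real (card {(x, y). x \<in> {-n..n} \<and> y \<in> {-n..n} \<and> Q dvd x\<^sup>2 - y\<^sup>2})
           \<le> 2 * (2 * n + 1) + (2 * n\<^sup>2 / Q + 2) * R"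
proof -
  define B where "B = {-n..n}"
  define Z0 where "Z0 = {(x, y). x \<in> B \<and> y \<in> B \<and> x\<^sup>2 - y\<^sup>2 = 0}"
  define S where "S = {(x, y). x \<in> B \<and> y \<in> B \<and> (x\<^sup>2 - y\<^sup>2) mod Q = 0 mod Q \<and> x\<^sup>2 - y\<^sup>2 \<noteq> 0}"
  have fin_B: "finite B" by (simp add: B_def)
  have fin: "finite Z0" "finite S"
    by (rule finite_subset[of _ "B \<times> B"], auto simp: Z0_def S_def fin_B)+
  have "Z0 \<subseteq> (\<lambda>x. (x, x)) ` B \<union> (\<lambda>x. (x, -x)) ` B"
  proof
    fix z assume "z \<in> Z0"
    then obtain x y where "z = (x, y)" "x \<in> B" "y = x \<or> y = -x"
      by (auto simp: Z0_def power2_eq_iff)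
    thus "z \<in> (\<lambda>x. (x, x)) ` B \<union> (\<lambda>x. (x, -x)) ` B" by auto
  qed
  hence "card Z0 \<le> card ((\<lambda>x. (x, x)) ` B \<union> (\<lambda>x. (x, -x)) ` B)"
    using fin_B by (intro card_mono) simp_all
  also have "\<dots> \<le> card ((\<lambda>x. (x, x)) ` B) + card ((\<lambda>x. (x, -x)) ` B)" by (rule card_Un_le)
  also have "\<dots> \<le> 2 * card B"
    using card_image_le[OF fin_B, of "\<lambda>x. (x, x)"] card_image_le[OF fin_B, of "\<lambda>x. (x, -x)"] by simp
  finally have "real (card Z0) \<le> 2 * (2 * n + 1)" using n by (simp add: B_def)
  moreover have "real (card S) \<le> (2 * n\<^sup>2 / Q + 2) * R"
    using card_nonzero_diff_squares_mod_le[OF Q n R reps, of 0] by (simp add: S_def B_def)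
  moreover have "{(x, y). x \<in> B \<and> y \<in> B \<and> Q dvd x\<^sup>2 - y\<^sup>2} \<subseteq> Z0 \<union> S"
    by (auto simp: Z0_def S_def dvd_eq_mod_eq_0)
  hence "card {(x, y). x \<in> B \<and> y \<in> B \<and> Q dvd x\<^sup>2 - y\<^sup>2} \<le> card (Z0 \<union> S)"
    using fin by (intro card_mono) auto
  hence "card {(x, y). x \<in> B \<and> y \<in> B \<and> Q dvd x\<^sup>2 - y\<^sup>2} \<le> card Z0 + card S"
    using card_Un_le le_trans by blast
  ultimately show ?thesis unfolding B_def by linarith
qed

definition diagonal_form :: "int \<Rightarrow> int \<times> int \<Rightarrow> int" where
  "diagonal_form a = (\<lambda>(x\<^sub>1, x\<^sub>2). x\<^sub>1\<^sup>2 + a * x\<^sub>2\<^sup>2)"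

definition diff_squares :: "int \<times> int \<Rightarrow> int" where
  "diff_squares = (\<lambda>(x, y). x\<^sup>2 - y\<^sup>2)"

text \<open>A collision of \<open>(x\<^sub>1, x\<^sub>2)\<close> and \<open>(y\<^sub>1, y\<^sub>2)\<close> is the same as a pair \<open>v = (x\<^sub>2, y\<^sub>2)\<close>,
  \<open>u = (x\<^sub>1, y\<^sub>1)\<close> with \<open>Q dvd diff_squares u + a * diff_squares v\<close>.\<close>

lemma card_diagonal_form_collisions_le_sum:
  fixes B :: "int set" and Q a :: int
  assumes B: "finite B"
  shows "card {(p, p'). p \<in> B \<times> B \<and> p' \<in> B \<times> B \<and> diagonal_form a p mod Q = diagonal_form a p' mod Q}
           \<le> (\<Sum>v\<in>B \<times> B. card {u \<in> B \<times> B. Q dvd diff_squares u + a * diff_squares v})"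
proof -
  define F where "F v = {u \<in> B \<times> B. Q dvd diff_squares u + a * diff_squares v}" for v
  have fin: "finite (F v)" for v using B by (simp add: F_def)
  have "{(p, p'). p \<in> B \<times> B \<and> p' \<in> B \<times> B \<and> diagonal_form a p mod Q = diagonal_form a p' mod Q}
          \<subseteq> (\<lambda>(v, u). ((fst u, fst v), (snd u, snd v))) ` Sigma (B \<times> B) F"
  proof clarify
    fix x\<^sub>1 x\<^sub>2 y\<^sub>1 y\<^sub>2 assume "x\<^sub>1 \<in> B" "x\<^sub>2 \<in> B" "y\<^sub>1 \<in> B" "y\<^sub>2 \<in> B"
      and "diagonal_form a (x\<^sub>1, x\<^sub>2) mod Q = diagonal_form a (y\<^sub>1, y\<^sub>2) mod Q"
    moreover have "diagonal_form a (x\<^sub>1, x\<^sub>2) - diagonal_form a (y\<^sub>1, y\<^sub>2)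
                     = diff_squares (x\<^sub>1, y\<^sub>1) + a * diff_squares (x\<^sub>2, y\<^sub>2)"
      by (simp add: diagonal_form_def diff_squares_def algebra_simps)
    ultimately have mem: "((x\<^sub>2, y\<^sub>2), (x\<^sub>1, y\<^sub>1)) \<in> Sigma (B \<times> B) F"
      by (auto simp: F_def mod_eq_dvd_iff)
    show "((x\<^sub>1, x\<^sub>2), (y\<^sub>1, y\<^sub>2)) \<in> (\<lambda>(v, u). ((fst u, fst v), (snd u, snd v))) ` Sigma (B \<times> B) F"
      by (rule image_eqI[OF _ mem]) simp
  qed
  hence "card {(p, p'). p \<in> B \<times> B \<and> p' \<in> B \<times> B \<and> diagonal_form a p mod Q = diagonal_form a p' mod Q}
           \<le> card ((\<lambda>(v, u). ((fst u, fst v), (snd u, snd v))) ` Sigma (B \<times> B) F)"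
    using B fin by (intro card_mono finite_imageI finite_SigmaI) auto
  also have "\<dots> \<le> card (Sigma (B \<times> B) F)"
    using B fin by (intro card_image_le finite_SigmaI) auto
  also have "\<dots> = (\<Sum>v\<in>B \<times> B. card (F v))"
    using B fin by (intro card_SigmaI) auto
  finally show ?thesis by (simp add: F_def)
qed

text \<open>If \<open>Q dvd diff_squares v\<close>, the condition on \<open>u\<close> is just \<open>Q dvd diff_squares u\<close>; otherwise
  \<open>diff_squares u\<close> is a nonzero number in a fixed residue class, as \<open>a\<close> is a unit mod \<open>Q\<close>.\<close>

lemma card_diagonal_form_collisions_le:
  fixes n Q a :: int and R :: real
  assumes Q: "Q > 0" and n: "n \<ge> 0" and R: "R \<ge> 0" and coprime: "coprime a Q"
    and reps: "\<And>m. m \<noteq> 0 \<Longrightarrow> \<bar>m\<bar> \<le> n\<^sup>2 \<Longrightarrow>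
        real (card {(x, y). x \<in> {-n..n} \<and> y \<in> {-n..n} \<and> x\<^sup>2 - y\<^sup>2 = m}) \<le> R"
  shows "real (card {(p, p'). p \<in> {-n..n} \<times> {-n..n} \<and> p' \<in> {-n..n} \<times> {-n..n} \<and>
                     diagonal_form a p mod Q = diagonal_form a p' mod Q})
     \<le> (real (card {(x, y). x \<in> {-n..n} \<and> y \<in> {-n..n} \<and> Q dvd x\<^sup>2 - y\<^sup>2}))\<^sup>2
        + (2 * n + 1)\<^sup>2 * ((2 * n\<^sup>2 / Q + 2) * R)"
proof -
  define B where "B = {-n..n}"
  define Z where "Z = {u \<in> B \<times> B. Q dvd diff_squares u}"
  define F where "F v = {u \<in> B \<times> B. Q dvd diff_squares u + a * diff_squares v}" for v
  define S where "S v = {(x, y). x \<in> B \<and> y \<in> B \<and>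
                          (x\<^sup>2 - y\<^sup>2) mod Q = (- a * diff_squares v) mod Q \<and> x\<^sup>2 - y\<^sup>2 \<noteq> 0}" for v
  have fin_B: "finite B" by (simp add: B_def)
  have fin: "finite (B \<times> B)" "finite Z" "\<And>v. finite (S v)"
    using fin_B by (auto simp: Z_def S_def intro: finite_subset[of _ "B \<times> B"])
  have "card {(p, p'). p \<in> B \<times> B \<and> p' \<in> B \<times> B \<and> diagonal_form a p mod Q = diagonal_form a p' mod Q}
          \<le> (\<Sum>v\<in>B \<times> B. card (F v))"
    unfolding F_def by (rule card_diagonal_form_collisions_le_sum[OF fin_B])
  also have "\<dots> = (\<Sum>v\<in>B \<times> B - Z. card (F v)) + (\<Sum>v\<in>Z. card (F v))"
    using fin by (intro sum.subset_diff) (auto simp: Z_def)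
  also have "(\<Sum>v\<in>Z. card (F v)) = (\<Sum>v\<in>Z. card Z)"
  proof (rule sum.cong)
    fix v assume "v \<in> Z"
    hence "Q dvd a * diff_squares v" by (simp add: Z_def)
    thus "card (F v) = card Z" by (simp add: F_def Z_def dvd_add_left_iff)
  qed simp
  finally have "real (card {(p, p'). p \<in> B \<times> B \<and> p' \<in> B \<times> B \<and>
                                  diagonal_form a p mod Q = diagonal_form a p' mod Q})
                  \<le> (\<Sum>v\<in>B \<times> B - Z. real (card (F v))) + real (card Z) ^ 2"
    by (simp add: power2_eq_square flip: of_nat_sum of_nat_mult of_nat_add)
  also have "(\<Sum>v\<in>B \<times> B - Z. real (card (F v))) \<le> real (card (B \<times> B - Z)) * ((2 * n\<^sup>2 / Q + 2) * R)"
  proof (rule sum_bounded_above)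
    fix v assume v: "v \<in> B \<times> B - Z"
    have "F v \<subseteq> S v"
    proof clarify
      fix x y assume u: "(x, y) \<in> F v"
      hence "diff_squares (x, y) \<noteq> 0"
        using v coprime by (auto simp: F_def Z_def coprime_commute coprime_dvd_mult_right_iff)
      with u show "(x, y) \<in> S v"
        by (auto simp: F_def S_def diff_squares_def mod_eq_dvd_iff)
    qed
    hence "card (F v) \<le> card (S v)" using fin by (intro card_mono)
    also have "real (card (S v)) \<le> (2 * n\<^sup>2 / Q + 2) * R"
      using card_nonzero_diff_squares_mod_le[OF Q n R reps] by (simp add: S_def B_def)
    finally show "real (card (F v)) \<le> (2 * n\<^sup>2 / Q + 2) * R" by simp
  qed
  also have "\<dots> \<le> (2 * n + 1)\<^sup>2 * ((2 * n\<^sup>2 / Q + 2) * R)"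
  proof (rule mult_right_mono)
    have "card (B \<times> B - Z) \<le> card (B \<times> B)" using fin by (intro card_mono) auto
    moreover have "real (card (B \<times> B)) = (2 * n + 1)\<^sup>2"
      using n by (simp add: B_def card_cartesian_product power2_eq_square)
    ultimately show "real (card (B \<times> B - Z)) \<le> (2 * n + 1)\<^sup>2" by linarith
  qed (use Q R in simp)
  also have "Z = {(x, y). x \<in> B \<and> y \<in> B \<and> Q dvd x\<^sup>2 - y\<^sup>2}" by (auto simp: Z_def diff_squares_def)
  finally show ?thesis by (simp add: B_def add.commute)
qed

context
  fixes q :: int and \<chi> :: "int \<Rightarrow> complex"
  assumes q: "q > 1" and \<chi>: "dirichlet_char q \<chi>"
begin

lemma dirichlet_char_mult: "\<chi> (m * n) = \<chi> m * \<chi> n"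
  using \<chi> by (simp add: dirichlet_char_def)

lemma dirichlet_char_eq_0_iff: "\<chi> n = 0 \<longleftrightarrow> \<not> coprime n q"
  using \<chi> by (simp add: dirichlet_char_def)

lemma dirichlet_char_add_mult_period: "\<chi> (n + k * q) = \<chi> n"
proof (induction k arbitrary: n rule: int_induct[where k = 0])
  case (step1 i)
  have "\<chi> (n + (i + 1) * q) = \<chi> ((n + i * q) + q)" by (simp add: algebra_simps)
  also have "\<dots> = \<chi> n" using \<chi> step1 by (simp add: dirichlet_char_def)
  finally show ?case .
next
  case (step2 i)
  have "\<chi> (n + (i - 1) * q) = \<chi> ((n + (i - 1) * q) + q)" using \<chi> by (simp add: dirichlet_char_def)
  also have "\<dots> = \<chi> n" using step2 by (simp add: algebra_simps)
  finally show ?case .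
qed simp

lemma dirichlet_char_mod: "\<chi> (n mod q) = \<chi> n"
  using dirichlet_char_add_mult_period[of "n mod q" "n div q"] by simp

lemma dirichlet_char_power: "\<chi> (n ^ k) = \<chi> n ^ k"
  by (induction k) (use \<chi> in \<open>simp_all add: dirichlet_char_def\<close>)

text \<open>By Euler's theorem \<open>\<chi> n\<close> is a root of unity when \<open>n\<close> is a unit mod \<open>q\<close>.\<close>

lemma norm_dirichlet_char: assumes "coprime n q" shows "cmod (\<chi> n) = 1"
proof -
  define t where "t = totient (nat q)"
  have "residues q" using q by (simp add: residues_def)
  hence "[n ^ t = 1] (mod q)" using residues.euler_theorem assms by (simp add: t_def)
  hence "(n ^ t) mod q = 1 mod q" by (simp add: cong_def)
  hence "\<chi> (n ^ t) = \<chi> 1" by (metis dirichlet_char_mod)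
  hence "\<chi> n ^ t = 1" using \<chi> by (simp add: dirichlet_char_power dirichlet_char_def)
  hence "cmod (\<chi> n ^ t) = 1" by simp
  hence "cmod (\<chi> n) ^ t = 1 ^ t" by (simp only: norm_power power_one)
  moreover have "t > 0" using q by (simp add: t_def)
  ultimately show ?thesis using power_eq_imp_eq_base[of "cmod (\<chi> n)" t 1] by simp
qed

lemma dirichlet_char_mult_cnj: "\<chi> n * cnj (\<chi> n) = (if coprime n q then 1 else 0)"
proof (cases "coprime n q")
  case True
  have "\<chi> n * cnj (\<chi> n) = complex_of_real ((cmod (\<chi> n))\<^sup>2)" by (rule complex_norm_square[symmetric])
  thus ?thesis using True norm_dirichlet_char by simp
qed (simp add: dirichlet_char_eq_0_iff)

end

lemma bij_betw_mult_mod: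
  fixes a q :: int assumes q: "q > 0" and coprime: "coprime a q"
  shows "bij_betw (\<lambda>r. (a * r) mod q) {0..<q} {0..<q}"
proof -
  have inj: "inj_on (\<lambda>r. (a * r) mod q) {0..<q}"
  proof (rule inj_onI)
    fix r s assume r: "r \<in> {0..<q}" and s: "s \<in> {0..<q}" and "(a * r) mod q = (a * s) mod q"
    hence "[a * r = a * s] (mod q)" by (simp add: cong_def)
    hence "[r = s] (mod q)" using coprime by (simp add: cong_mult_lcancel)
    thus "r = s" using r s by (simp add: cong_def)
  qed
  have "(\<lambda>r. (a * r) mod q) ` {0..<q} \<subseteq> {0..<q}" using q by auto
  thus ?thesis using endo_inj_surj[OF _ _ inj] inj by (simp add: bij_betw_def)
qed

lemma dirichlet_char_orthogonality:
  fixes q :: int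
  assumes q: "q > 1" and \<chi>: "dirichlet_char q \<chi>" and \<psi>: "dirichlet_char q \<psi>"
  shows "(\<Sum>r\<in>{0..<q}. \<chi> r * cnj (\<psi> r)) =
           (if \<chi> = \<psi> then of_nat (card {r \<in> {0..<q}. coprime r q}) else 0)"
proof (cases "\<chi> = \<psi>")
  case True
  have "(\<Sum>r\<in>{0..<q}. \<chi> r * cnj (\<chi> r)) = (\<Sum>r\<in>{0..<q}. if coprime r q then 1 else 0)"
    using dirichlet_char_mult_cnj[OF q \<chi>] by simp
  also have "\<dots> = of_nat (card {r \<in> {0..<q}. coprime r q})"
    by (simp add: sum.If_cases Int_def)
  finally show ?thesis using True by simp
next
  case False
  then obtain a where ne: "\<chi> a \<noteq> \<psi> a" by blast
  have coprime: "coprime a q"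
  proof (rule ccontr)
    assume "\<not> coprime a q"
    hence "\<chi> a = 0" "\<psi> a = 0"
      using dirichlet_char_eq_0_iff[OF q \<chi>] dirichlet_char_eq_0_iff[OF q \<psi>] by simp_all
    with ne show False by simp
  qed
  define T where "T = (\<Sum>r\<in>{0..<q}. \<chi> r * cnj (\<psi> r))"
  have "bij_betw (\<lambda>r. (a * r) mod q) {0..<q} {0..<q}" using q coprime by (simp add: bij_betw_mult_mod)
  hence "T = (\<Sum>r\<in>{0..<q}. \<chi> ((a * r) mod q) * cnj (\<psi> ((a * r) mod q)))"
    unfolding T_def by (rule sum.reindex_bij_betw[symmetric])
  also have "\<dots> = (\<Sum>r\<in>{0..<q}. (\<chi> a * cnj (\<psi> a)) * (\<chi> r * cnj (\<psi> r)))"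
    by (intro sum.cong refl)
       (simp add: dirichlet_char_mod[OF q \<chi>] dirichlet_char_mod[OF q \<psi>]
                  dirichlet_char_mult[OF q \<chi>] dirichlet_char_mult[OF q \<psi>] mult_ac)
  also have "\<dots> = (\<chi> a * cnj (\<psi> a)) * T" by (simp add: T_def sum_distrib_left)
  finally have T: "T = (\<chi> a * cnj (\<psi> a)) * T" .
  have "\<chi> a * cnj (\<psi> a) \<noteq> 1"
  proof
    assume "\<chi> a * cnj (\<psi> a) = 1"
    hence "\<chi> a * (\<psi> a * cnj (\<psi> a)) = \<psi> a" by (simp add: mult_ac)
    thus False using ne dirichlet_char_mult_cnj[OF q \<psi>, of a] coprime by simp
  qed
  with T have "T = 0" by (metis mult_cancel_right1)
  thus ?thesis using False by (simp add: T_def)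
qed

lemma sum_dirichlet_char_eq_sum_residues:
  fixes q :: int and X :: "'a set" and g :: "'a \<Rightarrow> int"
  assumes q: "q > 1" and \<chi>: "dirichlet_char q \<chi>" and X: "finite X"
  shows "(\<Sum>p\<in>X. \<chi> (g p)) = (\<Sum>r\<in>{0..<q}. of_nat (card {p \<in> X. g p mod q = r}) * \<chi> r)"
proof -
  have "(\<Sum>p\<in>X. \<chi> (g p)) = (\<Sum>p\<in>X. \<chi> (g p mod q))"
    using dirichlet_char_mod[OF q \<chi>] by simp
  also have "\<dots> = (\<Sum>r\<in>{0..<q}. \<Sum>p\<in>{p \<in> X. g p mod q = r}. \<chi> (g p mod q))"
    using q X by (intro sum.group[symmetric]) auto
  also have "\<dots> = (\<Sum>r\<in>{0..<q}. of_nat (card {p \<in> X. g p mod q = r}) * \<chi> r)"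
    by simp
  finally show ?thesis .
qed

lemma sum_card_fibres_squared:
  fixes q :: int and X :: "'a set" and g :: "'a \<Rightarrow> int"
  assumes q: "q > 0" and X: "finite X"
  shows "(\<Sum>r\<in>{0..<q}. card {p \<in> X. g p mod q = r} ^ 2)
           = card {(p, p'). p \<in> X \<and> p' \<in> X \<and> g p mod q = g p' mod q}"
proof -
  define Y where "Y = {(p, p'). p \<in> X \<and> p' \<in> X \<and> g p mod q = g p' mod q}"
  have fin: "finite Y" by (rule finite_subset[of _ "X \<times> X"]) (auto simp: Y_def X)
  have "(\<lambda>z. g (fst z) mod q) ` Y \<subseteq> {0..<q}" using q by auto
  hence "(\<Sum>r\<in>{0..<q}. \<Sum>z\<in>{z \<in> Y. g (fst z) mod q = r}. 1::nat) = (\<Sum>z\<in>Y. 1)"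
    by (rule sum.group[OF fin finite_atLeastLessThan_int])
  hence "card Y = (\<Sum>r\<in>{0..<q}. card {z \<in> Y. g (fst z) mod q = r})" by simp
  also have "\<dots> = (\<Sum>r\<in>{0..<q}. card ({p \<in> X. g p mod q = r} \<times> {p \<in> X. g p mod q = r}))"
    by (intro sum.cong refl arg_cong[where f = card]) (auto simp: Y_def)
  also have "\<dots> = (\<Sum>r\<in>{0..<q}. card {p \<in> X. g p mod q = r} ^ 2)"
    by (simp add: card_cartesian_product power2_eq_square)
  finally show ?thesis unfolding Y_def by (rule sym)
qed

lemma sum_orthogonal_combination_mult_cnj:
  fixes G :: "('a \<Rightarrow> complex) set" and b :: "('a \<Rightarrow> complex) \<Rightarrow> complex" and P :: real
  assumes G: "finite G"
    and orth: "\<And>\<chi> \<psi>. \<chi> \<in> G \<Longrightarrow> \<psi> \<in> G \<Longrightarrow>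
                 (\<Sum>r\<in>R. \<chi> r * cnj (\<psi> r)) = (if \<chi> = \<psi> then of_real P else 0)"
  shows "(\<Sum>r\<in>R. (\<Sum>\<chi>\<in>G. b \<chi> * \<chi> r) * cnj (\<Sum>\<psi>\<in>G. b \<psi> * \<psi> r))
           = of_real P * (\<Sum>\<chi>\<in>G. b \<chi> * cnj (b \<chi>))"
proof -
  have "(\<Sum>r\<in>R. (\<Sum>\<chi>\<in>G. b \<chi> * \<chi> r) * cnj (\<Sum>\<psi>\<in>G. b \<psi> * \<psi> r))
          = (\<Sum>r\<in>R. \<Sum>\<psi>\<in>G. \<Sum>\<chi>\<in>G. b \<chi> * cnj (b \<psi>) * (\<chi> r * cnj (\<psi> r)))"
    by (simp add: sum_distrib_left sum_distrib_right mult_ac)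
  also have "\<dots> = (\<Sum>\<psi>\<in>G. \<Sum>\<chi>\<in>G. b \<chi> * cnj (b \<psi>) * (\<Sum>r\<in>R. \<chi> r * cnj (\<psi> r)))"
    by (subst sum.swap) (simp add: sum.swap[of _ R] sum_distrib_left)
  also have "\<dots> = (\<Sum>\<psi>\<in>G. \<Sum>\<chi>\<in>G. b \<chi> * cnj (b \<psi>) * (if \<chi> = \<psi> then of_real P else 0))"
    by (intro sum.cong refl) (simp add: orth)
  also have "\<dots> = (\<Sum>\<chi>\<in>G. b \<chi> * cnj (b \<chi>) * of_real P)"
    by (intro sum.cong refl) (simp add: if_distrib G cong: if_cong)
  finally show ?thesis by (simp add: sum_distrib_left mult_ac)
qed

text \<open>With \<open>V\<close> the orthogonal projection of \<open>f\<close> onto the span of \<open>G\<close>, the squared distance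
  \<open>\<Sum>r. \<bar>f r - V r\<bar>\<^sup>2\<close> equals \<open>\<Sum>r. \<bar>f r\<bar>\<^sup>2 - A / P\<close>, where \<open>A\<close> is the left-hand side.\<close>

lemma bessel_inequality:
  fixes G :: "('a \<Rightarrow> complex) set" and R :: "'a set" and f :: "'a \<Rightarrow> complex" and P :: real
  assumes G: "finite G" and P: "P > 0"
    and orth: "\<And>\<chi> \<psi>. \<chi> \<in> G \<Longrightarrow> \<psi> \<in> G \<Longrightarrow>
                 (\<Sum>r\<in>R. \<chi> r * cnj (\<psi> r)) = (if \<chi> = \<psi> then of_real P else 0)"
  shows "(\<Sum>\<chi>\<in>G. (cmod (\<Sum>r\<in>R. f r * cnj (\<chi> r)))\<^sup>2) \<le> P * (\<Sum>r\<in>R. (cmod (f r))\<^sup>2)"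
proof -
  define a where "a \<chi> = (\<Sum>r\<in>R. f r * cnj (\<chi> r))" for \<chi>
  define b where "b \<chi> = a \<chi> / of_real P" for \<chi>
  define V where "V r = (\<Sum>\<chi>\<in>G. b \<chi> * \<chi> r)" for r
  define A where "A = (\<Sum>\<chi>\<in>G. (cmod (a \<chi>))\<^sup>2)"
  have norm_a: "a \<chi> * cnj (a \<chi>) = of_real ((cmod (a \<chi>))\<^sup>2)" for \<chi>
    by (rule complex_norm_square[symmetric])
  have f_V: "(\<Sum>r\<in>R. f r * cnj (V r)) = of_real A / of_real P"
  proof -
    have "(\<Sum>r\<in>R. f r * cnj (V r)) = (\<Sum>r\<in>R. \<Sum>\<chi>\<in>G. cnj (b \<chi>) * (f r * cnj (\<chi> r)))"
      by (simp add: V_def sum_distrib_left mult_ac)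
    also have "\<dots> = (\<Sum>\<chi>\<in>G. cnj (b \<chi>) * a \<chi>)"
      by (subst sum.swap) (simp add: a_def sum_distrib_left)
    also have "\<dots> = (\<Sum>\<chi>\<in>G. of_real ((cmod (a \<chi>))\<^sup>2) / of_real P)"
    proof (intro sum.cong refl)
      fix \<chi>
      have "cnj (b \<chi>) * a \<chi> = (a \<chi> * cnj (a \<chi>)) / of_real P" by (simp add: b_def mult.commute)
      thus "cnj (b \<chi>) * a \<chi> = of_real ((cmod (a \<chi>))\<^sup>2) / of_real P" by (simp only: norm_a)
    qed
    finally show ?thesis by (simp add: A_def sum_divide_distrib)
  qed
  have V_V: "(\<Sum>r\<in>R. V r * cnj (V r)) = of_real A / of_real P"
  proof -
    have "(\<Sum>r\<in>R. V r * cnj (V r)) = of_real P * (\<Sum>\<chi>\<in>G. b \<chi> * cnj (b \<chi>))"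
      unfolding V_def by (rule sum_orthogonal_combination_mult_cnj[OF G orth])
    also have "\<dots> = (\<Sum>\<chi>\<in>G. of_real ((cmod (a \<chi>))\<^sup>2) / of_real P)"
      unfolding sum_distrib_left
    proof (intro sum.cong refl)
      fix \<chi>
      have "of_real P * (b \<chi> * cnj (b \<chi>)) = (a \<chi> * cnj (a \<chi>)) / of_real P"
        using P by (simp add: b_def field_simps power2_eq_square)
      thus "of_real P * (b \<chi> * cnj (b \<chi>)) = of_real ((cmod (a \<chi>))\<^sup>2) / of_real P"
        by (simp only: norm_a)
    qed
    finally show ?thesis by (simp add: A_def sum_divide_distrib)
  qed
  have "of_real (\<Sum>r\<in>R. (cmod (f r - V r))\<^sup>2) = (\<Sum>r\<in>R. (f r - V r) * cnj (f r - V r))"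
    by (simp only: of_real_sum complex_norm_square)
  also have "\<dots> = (\<Sum>r\<in>R. f r * cnj (f r)) - (\<Sum>r\<in>R. f r * cnj (V r))
                   - cnj (\<Sum>r\<in>R. f r * cnj (V r)) + (\<Sum>r\<in>R. V r * cnj (V r))"
    by (simp add: algebra_simps sum.distrib sum_subtractf)
  also have "\<dots> = of_real ((\<Sum>r\<in>R. (cmod (f r))\<^sup>2) - A / P)"
    unfolding f_V V_V by (simp del: of_real_power add: of_real_sum complex_norm_square)
  finally have "(\<Sum>r\<in>R. (cmod (f r))\<^sup>2) - A / P = (\<Sum>r\<in>R. (cmod (f r - V r))\<^sup>2)"
    by (simp only: of_real_eq_iff)
  moreover have "(\<Sum>r\<in>R. (cmod (f r - V r))\<^sup>2) \<ge> 0" by (intro sum_nonneg) auto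
  ultimately have "A \<le> P * (\<Sum>r\<in>R. (cmod (f r))\<^sup>2)" using P by (simp add: field_simps)
  thus ?thesis by (simp add: A_def a_def)
qed

lemma sum_dirichlet_chars_norm_sq_le_card_collisions:
  fixes q :: int and X :: "'a set" and g :: "'a \<Rightarrow> int"
  assumes q: "q > 1" and X: "finite X"
  shows "(\<Sum>\<chi>\<in>{\<chi>. dirichlet_char q \<chi>}. (cmod (\<Sum>p\<in>X. \<chi> (g p)))\<^sup>2)
           \<le> of_int q * real (card {(p, p'). p \<in> X \<and> p' \<in> X \<and> g p mod q = g p' mod q})"
proof (cases "finite {\<chi>. dirichlet_char q \<chi>}")
  case False
  thus ?thesis using q by simp
next
  case True
  define c where "c r = real (card {p \<in> X. g p mod q = r})" for r
  define P where "P = real (card {r \<in> {0..<q}. coprime r q})"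
  have fin: "finite {r \<in> {0..<q}. coprime r q}" by (rule finite_subset[of _ "{0..<q}"]) auto
  moreover have "1 \<in> {r \<in> {0..<q}. coprime r q}" using q by simp
  ultimately have "card {r \<in> {0..<q}. coprime r q} > 0" using card_gt_0_iff by blast
  hence "P > 0" by (simp add: P_def)
  have "card {r \<in> {0..<q}. coprime r q} \<le> card {0..<q}" by (intro card_mono) auto
  hence "P \<le> of_int q" using q by (simp add: P_def)
  have "(\<Sum>\<chi>\<in>{\<chi>. dirichlet_char q \<chi>}. (cmod (\<Sum>p\<in>X. \<chi> (g p)))\<^sup>2)
          = (\<Sum>\<chi>\<in>{\<chi>. dirichlet_char q \<chi>}. (cmod (\<Sum>r\<in>{0..<q}. of_real (c r) * cnj (\<chi> r)))\<^sup>2)"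
  proof (intro sum.cong refl)
    fix \<chi> assume "\<chi> \<in> {\<chi>. dirichlet_char q \<chi>}"
    hence "(\<Sum>p\<in>X. \<chi> (g p)) = cnj (\<Sum>r\<in>{0..<q}. of_real (c r) * cnj (\<chi> r))"
      using sum_dirichlet_char_eq_sum_residues[OF q _ X] by (simp add: c_def)
    thus "(cmod (\<Sum>p\<in>X. \<chi> (g p)))\<^sup>2 = (cmod (\<Sum>r\<in>{0..<q}. of_real (c r) * cnj (\<chi> r)))\<^sup>2"
      by (simp only: complex_mod_cnj)
  qed
  also have "\<dots> \<le> P * (\<Sum>r\<in>{0..<q}. (cmod (of_real (c r)))\<^sup>2)"
    using True \<open>P > 0\<close> dirichlet_char_orthogonality[OF q] by (intro bessel_inequality) (auto simp: P_def)
  also have "(\<Sum>r\<in>{0..<q}. (cmod (of_real (c r)))\<^sup>2) = real (\<Sum>r\<in>{0..<q}. card {p \<in> X. g p mod q = r} ^ 2)"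
    by (simp add: c_def)
  also have "\<dots> = real (card {(p, p'). p \<in> X \<and> p' \<in> X \<and> g p mod q = g p' mod q})"
    using sum_card_fibres_squared[of q X g] q X by simp
  also have "P * \<dots> \<le> of_int q * \<dots>"
    using \<open>P \<le> of_int q\<close> by (intro mult_right_mono) auto
  finally show ?thesis .
qed

lemma collision_bound_arith:
  fixes N W t K Z T :: real
  assumes N: "N \<ge> 1" and W: "1 \<le> W" "W \<le> 3 / 2 * N" and t: "t \<ge> 1" and K: "K \<ge> 0"
    and Z: "0 \<le> Z" "Z \<le> 6 * N + 4 * K * W * t"
    and T: "T \<le> Z\<^sup>2 + 9 * N\<^sup>2 * (4 * K * W * t)"
  shows "T \<le> (72 + 48 * K\<^sup>2 + 36 * K) * (N\<^sup>2 * t\<^sup>2) * W"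
proof -
  have "Z\<^sup>2 \<le> (6 * N + 4 * K * W * t)\<^sup>2" using Z by (intro power_mono) auto
  also have "\<dots> \<le> 72 * N\<^sup>2 + 32 * K\<^sup>2 * (W * W) * t\<^sup>2"
    using sum_squares_ge_zero[of "6 * N - 4 * K * W * t" 0] by (simp add: power2_eq_square algebra_simps)
  finally have "T \<le> 72 * N\<^sup>2 + 32 * K\<^sup>2 * (W * W) * t\<^sup>2 + 9 * N\<^sup>2 * (4 * K * W * t)"
    using T by linarith
  also have "\<dots> \<le> 72 * N\<^sup>2 * (W * t\<^sup>2) + 32 * K\<^sup>2 * (3 / 2 * N\<^sup>2 * W) * t\<^sup>2 + 9 * N\<^sup>2 * (4 * K * W * t\<^sup>2)"
  proof (intro add_mono)
    have "1 \<le> W * t\<^sup>2" using W t by (metis mult_mono one_le_power mult_1 zero_le_one order_trans)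
    thus "72 * N\<^sup>2 \<le> 72 * N\<^sup>2 * (W * t\<^sup>2)" using mult_left_mono[of 1 "W * t\<^sup>2" "72 * N\<^sup>2"] by simp
    have "W * W \<le> (3 / 2 * N) * W" using W by (intro mult_right_mono) auto
    also have "\<dots> \<le> 3 / 2 * N\<^sup>2 * W" using N W by (intro mult_right_mono) (auto simp: power2_eq_square)
    finally have WW: "W * W \<le> 3 / 2 * N\<^sup>2 * W" .
    show "32 * K\<^sup>2 * (W * W) * t\<^sup>2 \<le> 32 * K\<^sup>2 * (3 / 2 * N\<^sup>2 * W) * t\<^sup>2"
      by (rule mult_right_mono[OF mult_left_mono[OF WW]]) simp_all
    show "9 * N\<^sup>2 * (4 * K * W * t) \<le> 9 * N\<^sup>2 * (4 * K * W * t\<^sup>2)"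
      using K W t by (intro mult_left_mono) (auto simp: power2_eq_square)
  qed
  also have "\<dots> = (72 + 48 * K\<^sup>2 + 36 * K) * (N\<^sup>2 * t\<^sup>2) * W" by (simp add: algebra_simps)
  finally show ?thesis .
qed

lemma card_diagonal_form_collisions_le_powr:
  fixes N q :: nat and a :: int and K \<epsilon> :: real
  assumes divisors: "\<And>k::nat. k > 0 \<Longrightarrow> real (card {d. d dvd k}) \<le> K * real k powr (\<epsilon> / 4)"
    and \<epsilon>: "\<epsilon> > 0" and N: "N \<ge> 1" and q: "2 * N < q" and coprime: "coprime a (int q)"
  shows "real (card {(p, p'). p \<in> {-int N..int N} \<times> {-int N..int N} \<and> p' \<in> {-int N..int N} \<times> {-int N..int N} \<and>
                     diagonal_form a p mod int q = diagonal_form a p' mod int q})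
           \<le> (72 + 48 * K\<^sup>2 + 36 * K) * real N powr (2 + \<epsilon>) * (1 + (real N)\<^sup>2 / real q)"
proof -
  define t where "t = real N powr (\<epsilon> / 2)"
  define W where "W = 1 + (real N)\<^sup>2 / real q"
  define Z where "Z = real (card {(x, y). x \<in> {-int N..int N} \<and> y \<in> {-int N..int N} \<and> int q dvd x\<^sup>2 - y\<^sup>2})"
  have "K \<ge> 1" using divisors[of 1] by simp
  have t: "t \<ge> 1" using N \<epsilon> by (simp add: t_def ge_one_powr_ge_zero)
  have "(real N)\<^sup>2 / real q \<le> real N / 2" using q N by (simp add: field_simps power2_eq_square)
  hence W: "1 \<le> W" "W \<le> 3 / 2 * real N" using N by (auto simp: W_def)
  have reps: "real (card {(x, y). x \<in> {-int N..int N} \<and> y \<in> {-int N..int N} \<and> x\<^sup>2 - y\<^sup>2 = m})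
                \<le> 2 * K * t" if "m \<noteq> 0" "\<bar>m\<bar> \<le> (int N)\<^sup>2" for m
    using card_diff_squares_eq_le_powr[OF divisors _ _ that] \<epsilon> by (simp add: t_def)
  have class_bound: "(2 * (int N)\<^sup>2 / int q + 2) * (2 * K * t) = 4 * K * W * t"
    using q by (simp add: W_def field_simps)
  have "Z \<le> 2 * (2 * int N + 1) + 4 * K * W * t"
    using card_diff_squares_dvd_le[of "int q" "int N" "2 * K * t", OF _ _ _ reps] q \<open>K \<ge> 1\<close> t
    unfolding Z_def class_bound by simp
  hence "Z \<le> 6 * real N + 4 * K * W * t" using N by simp
  moreover have "(2 * real N + 1)\<^sup>2 \<le> (3 * real N)\<^sup>2"
    using N by (intro power_mono) auto
  moreover have "real (card {(p, p'). p \<in> {-int N..int N} \<times> {-int N..int N} \<and> p' \<in> {-int N..int N} \<times> {-int N..int N} \<and>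
                     diagonal_form a p mod int q = diagonal_form a p' mod int q})
                   \<le> Z\<^sup>2 + (2 * real N + 1)\<^sup>2 * (4 * K * W * t)"
    using card_diagonal_form_collisions_le[of "int q" "int N" "2 * K * t" a, OF _ _ _ _ reps]
          q \<open>K \<ge> 1\<close> t coprime unfolding Z_def class_bound by simp
  ultimately have "real (card {(p, p'). p \<in> {-int N..int N} \<times> {-int N..int N} \<and> p' \<in> {-int N..int N} \<times> {-int N..int N} \<and>
                     diagonal_form a p mod int q = diagonal_form a p' mod int q})
                   \<le> (72 + 48 * K\<^sup>2 + 36 * K) * ((real N)\<^sup>2 * t\<^sup>2) * W"
    using \<open>K \<ge> 1\<close> t W N
    by (intro collision_bound_arith[where Z = Z]) (auto simp: Z_def intro: order_trans mult_right_mono)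
  also have "(real N)\<^sup>2 * t\<^sup>2 = real N powr (2 + \<epsilon>)"
  proof -
    have "t\<^sup>2 = real N powr \<epsilon>" by (simp add: t_def power2_eq_square flip: powr_add)
    moreover have "(real N)\<^sup>2 = real N powr 2" using N by (simp add: powr_numeral)
    ultimately show ?thesis by (simp add: powr_add)
  qed
  finally show ?thesis by (simp add: W_def)
qed

lemma sum_dirichlet_chars_diagonal_form_le:
  fixes N q :: nat and a :: int and K \<epsilon> :: real
  assumes divisors: "\<And>k::nat. k > 0 \<Longrightarrow> real (card {d. d dvd k}) \<le> K * real k powr (\<epsilon> / 4)"
    and \<epsilon>: "\<epsilon> > 0" and coprime: "coprime a (int q)" and N: "N \<ge> 1" and "real N < real q / 2"
  shows "(\<Sum>\<chi>\<in>{\<chi>. dirichlet_char (int q) \<chi>}.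
            (cmod (\<Sum>x\<^sub>1\<in>{-int N..int N}. \<Sum>x\<^sub>2\<in>{-int N..int N}. \<chi> (x\<^sub>1\<^sup>2 + a * x\<^sub>2\<^sup>2)))\<^sup>2)
           \<le> (72 + 48 * K\<^sup>2 + 36 * K) * real q * real N powr (2 + \<epsilon>) * (1 + (real N)\<^sup>2 / real q)"
proof -
  let ?B = "{-int N..int N}"
  have q: "2 * N < q" using \<open>real N < real q / 2\<close> by simp
  have double_sum: "(\<Sum>x\<^sub>1\<in>?B. \<Sum>x\<^sub>2\<in>?B. \<chi> (x\<^sub>1\<^sup>2 + a * x\<^sub>2\<^sup>2)) = (\<Sum>p\<in>?B \<times> ?B. \<chi> (diagonal_form a p))"
    for \<chi> :: "int \<Rightarrow> complex"
    by (simp add: sum.cartesian_product diagonal_form_def case_prod_beta)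
  have "int q > 1" using q N by simp
  hence "(\<Sum>\<chi>\<in>{\<chi>. dirichlet_char (int q) \<chi>}. (cmod (\<Sum>x\<^sub>1\<in>?B. \<Sum>x\<^sub>2\<in>?B. \<chi> (x\<^sub>1\<^sup>2 + a * x\<^sub>2\<^sup>2)))\<^sup>2)
           \<le> real q * real (card {(p, p'). p \<in> ?B \<times> ?B \<and> p' \<in> ?B \<times> ?B \<and>
                                        diagonal_form a p mod int q = diagonal_form a p' mod int q})"
    unfolding double_sum
    using sum_dirichlet_chars_norm_sq_le_card_collisions[of "int q" "?B \<times> ?B" "diagonal_form a"] by simp
  also have "\<dots> \<le> real q * ((72 + 48 * K\<^sup>2 + 36 * K) * real N powr (2 + \<epsilon>) * (1 + (real N)\<^sup>2 / real q))"
    using card_diagonal_form_collisions_le_powr[OF divisors \<epsilon> N q coprime] by (intro mult_left_mono) auto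
  finally show ?thesis by (simp add: mult_ac)
qed

theorem mainTheorem6:
  "\<forall>\<epsilon>::real. \<epsilon> > 0 \<longrightarrow>
     (\<exists>C::real. C > 0 \<and>
       (\<forall>(q::nat) (\<alpha>\<^sub>2::int) (N::nat).
          odd q \<longrightarrow> coprime \<alpha>\<^sub>2 (int q) \<longrightarrow> N \<ge> 1 \<longrightarrow> real N < real q / 2 \<longrightarrow>
          (\<Sum>\<chi>\<in>{\<chi>. dirichlet_char (int q) \<chi>}.
              (cmod (\<Sum>x\<^sub>1\<in>{-int N..int N}. \<Sum>x\<^sub>2\<in>{-int N..int N}.
                        \<chi> (x\<^sub>1^2 + \<alpha>\<^sub>2 * x\<^sub>2^2)))^2)
          \<le> C * real q * real N powr (2 + \<epsilon>) * (1 + (real N)^2 / real q)))"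
proof (intro allI impI)
  fix \<epsilon> :: real assume \<epsilon>: "\<epsilon> > 0"
  then obtain K where K: "K > 0"
    and divisors: "\<And>n::nat. n > 0 \<Longrightarrow> real (card {d. d dvd n}) \<le> K * real n powr (\<epsilon> / 4)"
    using card_divisors_le_powr[of "\<epsilon> / 4"] by auto
  have "72 + 48 * K\<^sup>2 + 36 * K > 0" using K by (simp add: add_pos_nonneg)
  with sum_dirichlet_chars_diagonal_form_le[OF divisors \<epsilon>]
  show "\<exists>C::real. C > 0 \<and>
          (\<forall>(q::nat) (\<alpha>\<^sub>2::int) (N::nat).
             odd q \<longrightarrow> coprime \<alpha>\<^sub>2 (int q) \<longrightarrow> N \<ge> 1 \<longrightarrow> real N < real q / 2 \<longrightarrow>
             (\<Sum>\<chi>\<in>{\<chi>. dirichlet_char (int q) \<chi>}.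
                 (cmod (\<Sum>x\<^sub>1\<in>{-int N..int N}. \<Sum>x\<^sub>2\<in>{-int N..int N}. \<chi> (x\<^sub>1^2 + \<alpha>\<^sub>2 * x\<^sub>2^2)))^2)
             \<le> C * real q * real N powr (2 + \<epsilon>) * (1 + (real N)^2 / real q))"
    by blast
qed

end
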